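(* Let $\ell$ be a positive odd integer, $p$ an odd prime, and $n$ a positive integer with $p^2\mid\Omega_\ell(n)$. Suppose there exist a divisor $d_1$ of $\ell$ and an integer $a$ with $2\le a\le n$ such that $p\,\|\,a^{d_1}+1$ (i.e. $p\mid a^{d_1}+1$ and $p^2\nmid a^{d_1}+1$), and suppose that $p\nmid b^{\gcd(\ell,p-1)}+1$ for every integer $b$ with $2\le b\le n$, $b\ne a$. Then $p\mid \ell$.
   Context: $\Omega_\ell(n)=\prod_{a=1}^{n}(a^\ell+1)$. *)

theory Defs
  imports "HOL-Computational_Algebra.Primes"
begin

definition Omega :: "nat \<Rightarrow> nat \<Rightarrow> nat" where
  "Omega l n = (\<Prod>a = 1..n. a ^ l + 1)"

end

theory Submission
  imports Defs "HOL-Number_Theory.Number_Theory"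
begin

text \<open>Every factor \<open>b^\<ell> + 1\<close> with \<open>b \<noteq> a\<close> is prime to \<open>p\<close>: if \<open>p\<close> divided it,
  combining \<open>b^\<ell> \<equiv> -1\<close> with Fermat's \<open>b^(p-1) \<equiv> 1\<close> via Bezout would give
  \<open>b^gcd(\<ell>,p-1) \<equiv> -1 (mod p)\<close>, which is excluded. Hence \<open>p\<^sup>2 \<mid> a^\<ell> + 1\<close>. Writing
  \<open>\<ell> = d\<^sub>1 k\<close> with \<open>k\<close> odd and \<open>x = a^d\<^sub>1 = pt - 1\<close>, the binomial expansion gives
  \<open>x^k + 1 \<equiv> kpt (mod p\<^sup>2)\<close> with \<open>p \<nmid> t\<close>, so \<open>p \<mid> k\<close> and thus \<open>p \<mid> \<ell>\<close>.\<close>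

lemma square_dvd_power_minus_one_linear:
  fixes y :: "'a :: comm_ring_1"
  shows "y^2 dvd (y - 1)^k - (-1)^k * (1 - of_nat k * y)"
proof (induction k)
  case 0
  then show ?case by simp
next
  case (Suc k)
  then obtain c where c: "(y - 1)^k = (-1)^k * (1 - of_nat k * y) + y^2 * c"
    by (auto simp: dvd_def algebra_simps)
  have "(y - 1)^Suc k = (-1)^Suc k * (1 - of_nat (Suc k) * y)
          + y^2 * ((-1)^Suc k * of_nat k + (y - 1) * c)"
    by (simp add: c algebra_simps power2_eq_square)
  then show ?case by simp
qed

lemma prime_dvd_exponent_if_square_dvd_odd_power_plus_one:
  fixes p x k :: nat
  assumes "prime p" "p dvd x + 1" "\<not> p^2 dvd x + 1" "odd k" "p^2 dvd x^k + 1"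
  shows "p dvd k"
proof -
  obtain t where t: "x + 1 = p * t" using assms(2) by blast
  have "\<not> p dvd t"
    using assms(3) t by (auto simp: power2_eq_square)
  have x: "int x = int p * int t - 1"
    using arg_cong[OF t, of int] by simp
  obtain c where c: "(int p * int t - 1)^k - (-1)^k * (1 - int k * (int p * int t))
      = (int p * int t)^2 * c"
    using square_dvd_power_minus_one_linear[of "int p * int t" k] by (auto simp: dvd_def)
  have "int x ^ k + 1 = int p * (int k * int t) + (int p)^2 * (int t ^ 2 * c)"
    using c assms(4) by (simp add: x algebra_simps power_mult_distrib)
  moreover have "(int p)^2 dvd int x ^ k + 1"
    using assms(5) of_nat_dvd_iff[of "p^2" "x^k + 1", where 'a = int] by (simp add: add.commute)
  ultimately have "int p * int p dvd int p * (int k * int t)"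
    by (simp add: dvd_add_left_iff power2_eq_square)
  then have "p dvd k * t"
    using assms(1) of_nat_dvd_iff[of p "k * t", where 'a = int] by (simp add: prime_gt_0_nat)
  with \<open>\<not> p dvd t\<close> show ?thesis
    using assms(1) prime_dvd_mult_iff by blast
qed

lemma cong_minus_one_iff_dvd_plus_one:
  fixes x m :: nat
  shows "[int x = -1] (mod int m) \<longleftrightarrow> m dvd x + 1"
  using of_nat_dvd_iff[of m "x + 1", where 'a = int] by (simp add: cong_iff_dvd_diff add.commute)

lemma cong_power_gcd_if_power_minus_one:
  fixes x m :: int
  assumes "[x ^ l = -1] (mod m)" "[x ^ e = 1] (mod m)" "l \<noteq> 0"
  obtains u where "[x ^ gcd l e = (-1)^u] (mod m)"
proof -
  obtain u v where uv: "l * u = e * v + gcd l e"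
    using bezout_nat[OF assms(3)] by blast
  have "[x ^ gcd l e = (x ^ e) ^ v * x ^ gcd l e] (mod m)"
    using cong_mult[OF cong_pow[OF assms(2), of v] cong_refl] by (simp add: cong_sym)
  also have "(x ^ e) ^ v * x ^ gcd l e = (x ^ l) ^ u"
    by (simp add: uv power_add flip: power_mult)
  also have "[(x ^ l) ^ u = (-1)^u] (mod m)"
    using assms(1) by (rule cong_pow)
  finally show ?thesis using that by blast
qed

lemma prime_dvd_power_gcd_plus_one:
  fixes p b l :: nat
  assumes "prime p" "odd p" "odd l" "p dvd b^l + 1"
  shows "p dvd b ^ gcd l (p - 1) + 1"
proof -
  have "p > 2"
    using assms(1,2) prime_ge_2_nat[of p] by (cases "p = 2") auto
  have minus_one: "[int b ^ l = -1] (mod int p)"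
    using assms(4) cong_minus_one_iff_dvd_plus_one[of "b ^ l" p] by simp
  have "\<not> p dvd b"
  proof
    assume "p dvd b"
    then have "p dvd b ^ l"
      using odd_pos[OF assms(3)] by (metis dvd_trans dvd_power)
    then have "p dvd 1"
      using assms(4) by (simp only: dvd_add_right_iff)
    with \<open>p > 2\<close> show False by simp
  qed
  then have "[int b ^ (p - 1) = 1] (mod int p)"
    using fermat_theorem[OF assms(1)] by (metis cong_int_iff of_nat_1 of_nat_power)
  then obtain u where u: "[int b ^ gcd l (p - 1) = (-1)^u] (mod int p)"
    using cong_power_gcd_if_power_minus_one[OF minus_one] odd_pos[OF assms(3)] by blast
  show ?thesis
  proof (cases "odd u")
    case True
    then show ?thesis
      using u cong_minus_one_iff_dvd_plus_one[of "b ^ gcd l (p - 1)" p] by simp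
  next
    case False
    then have "[int b ^ gcd l (p - 1) = 1] (mod int p)"
      using u by simp
    then have "[(int b ^ gcd l (p - 1)) ^ (l div gcd l (p - 1)) = 1] (mod int p)"
      using cong_pow by fastforce
    then have "[-1 = 1] (mod int p)"
      using minus_one by (simp flip: power_mult) (meson cong_sym cong_trans)
    then have "p dvd 2"
      using cong_minus_one_iff_dvd_plus_one[of 1 p] by (simp add: cong_sym_eq numeral_2_eq_2)
    with \<open>p > 2\<close> show ?thesis by (simp add: dvd_imp_le leD)
  qed
qed

lemma prime_not_dvd_prod_other_factors:
  fixes l p n a :: nat
  assumes "odd l" "prime p" "odd p"
    and "\<forall>b. 2 \<le> b \<and> b \<le> n \<and> b \<noteq> a \<longrightarrow> \<not> p dvd b ^ gcd l (p - 1) + 1"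
  shows "\<not> p dvd (\<Prod>b \<in> {1..n} - {a}. b ^ l + 1)"
proof
  assume "p dvd (\<Prod>b \<in> {1..n} - {a}. b ^ l + 1)"
  then have "\<exists>b \<in> {1..n} - {a}. p dvd b ^ l + 1"
    by (subst (asm) prime_dvd_prod_iff[OF _ assms(2)]) auto
  then obtain b where b: "b \<in> {1..n} - {a}" "p dvd b ^ l + 1" by blast
  show False
  proof (cases "b = 1")
    case True
    then have "p dvd 2" using b by (simp add: numeral_2_eq_2)
    then have "p \<le> 2" by (rule dvd_imp_le) simp
    with prime_ge_2_nat[OF assms(2)] have "p = 2" by simp
    with assms(3) show False by simp
  next
    case False
    with b have "2 \<le> b" "b \<le> n" "b \<noteq> a" by auto
    with assms(4) prime_dvd_power_gcd_plus_one[OF assms(2,3,1) b(2)] show False by blast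
  qed
qed

theorem lemma6:
  fixes l p n d1 a :: nat
  assumes "l > 0" and "odd l"
    and "prime p" and "odd p"
    and "n > 0"
    and "p^2 dvd Omega l n"
    and "d1 dvd l"
    and "2 \<le> a" and "a \<le> n"
    and "p dvd a ^ d1 + 1" and "\<not> p^2 dvd a ^ d1 + 1"
    and "\<forall>b. 2 \<le> b \<and> b \<le> n \<and> b \<noteq> a \<longrightarrow> \<not> p dvd b ^ gcd l (p - 1) + 1"
  shows "p dvd l"
proof -
  have factor: "Omega l n = (a^l + 1) * (\<Prod>b \<in> {1..n} - {a}. b ^ l + 1)"
    unfolding Omega_def using assms(8,9) by (intro prod.remove) auto
  have coprime: "coprime (p^2) (\<Prod>b \<in> {1..n} - {a}. b ^ l + 1)"
    using prime_not_dvd_prod_other_factors[OF assms(2,3,4,12)] assms(3)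
    by (simp add: prime_imp_coprime)
  have "p^2 dvd a^l + 1"
    using assms(6) by (simp only: factor coprime_dvd_mult_left_iff[OF coprime])
  obtain k where k: "l = d1 * k" using assms(7) by blast
  with assms(2) have "odd k" by simp
  with \<open>p^2 dvd a^l + 1\<close> have "p dvd k"
    using prime_dvd_exponent_if_square_dvd_odd_power_plus_one[OF assms(3,10,11)]
    by (simp add: k power_mult)
  with k show ?thesis by simp
qed

end
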